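(* Let $n\ge 3$ and $S_n$ be as defined below. Then $S_n$ is cancellative and it has a group of fractions $G$ equal to the central localization $S_n\langle a_1a_2\cdots a_n\rangle^{-1}$. Moreover $G\cong F\times C$, where $F=\operatorname{gr}(a_1,\dots,a_{n-1})\subseteq G$ is a free group of rank $n-1$ and $C=\operatorname{gr}(a_1a_2\cdots a_n)\subseteq G$ is an infinite cyclic group.
   Context: For $n\ge 3$, $S_n$ denotes the monoid with generators $a_1,\dots,a_n$ and defining relations $a_1a_2\cdots a_n=a_{\sigma(1)}a_{\sigma(2)}\cdots a_{\sigma(n)}$ for all $\sigma$ in the cyclic subgroup of $\operatorname{Sym}_n$ generated by the cycle $(1,2,\dots,n)$. $\operatorname{gr}(b_1,\dots,b_m)$ denotes the subgroup generated by $b_1,\dots,b_m$, and $\langle z\rangle$ denotes the submonoid generated by $z$. *)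

theory Defs
  imports "HOL-Algebra.Algebra"
begin

text \<open>Generators a_1,...,a_n of S_n are encoded as the letters 0,...,n-1;
  elements of the free monoid are words (nat lists) over {0..<n}.\<close>

definition sn_words :: "nat \<Rightarrow> nat list set" where
  "sn_words n = {w. set w \<subseteq> {0..<n}}"

text \<open>Defining relations: a_1...a_n = a_sigma(1)...a_sigma(n), sigma a power of (1 2 ... n),
  i.e. the word [0..<n] equals each of its cyclic rotations.\<close>
definition sn_rel :: "nat \<Rightarrow> nat list \<Rightarrow> nat list \<Rightarrow> bool" where
  "sn_rel n u v \<longleftrightarrow> (\<exists>k<n. u = [0..<n] \<and> v = rotate k [0..<n])"

text \<open>The monoid congruence generated by the defining relations; S_n is the quotient
  of sn_words n by sn_eq n.\<close>
inductive sn_eq :: "nat \<Rightarrow> nat list \<Rightarrow> nat list \<Rightarrow> bool" for n where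
  refl: "sn_eq n w w"
| sym: "sn_eq n u v \<Longrightarrow> sn_eq n v u"
| trans: "sn_eq n u v \<Longrightarrow> sn_eq n v w \<Longrightarrow> sn_eq n u w"
| rel: "sn_rel n u v \<Longrightarrow> sn_eq n (p @ u @ q) (p @ v @ q)"

definition weval :: "('g, 'b) monoid_scheme \<Rightarrow> (nat \<Rightarrow> 'g) \<Rightarrow> nat list \<Rightarrow> 'g" where
  "weval G x w = foldr (\<lambda>i acc. x i \<otimes>\<^bsub>G\<^esub> acc) w \<one>\<^bsub>G\<^esub>"

definition free_reduced :: "('g \<times> bool) list \<Rightarrow> bool" where
  "free_reduced ws \<longleftrightarrow>
     (\<forall>i. Suc i < length ws \<longrightarrow> \<not> (fst (ws ! i) = fst (ws ! Suc i) \<and> snd (ws ! i) \<noteq> snd (ws ! Suc i)))"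

definition free_basis :: "('g, 'b) monoid_scheme \<Rightarrow> 'g set \<Rightarrow> bool" where
  "free_basis G B \<longleftrightarrow> B \<subseteq> carrier G \<and>
     (\<forall>ws :: ('g \<times> bool) list. ws \<noteq> [] \<and> fst ` set ws \<subseteq> B \<and> free_reduced ws \<longrightarrow>
        foldr (\<lambda>(g, b) acc. (if b then g else inv\<^bsub>G\<^esub> g) \<otimes>\<^bsub>G\<^esub> acc) ws \<one>\<^bsub>G\<^esub> \<noteq> \<one>\<^bsub>G\<^esub>)"

end

theory Submission
  imports Defs
begin

(* The monoid S_n = <a_1,...,a_n | a_1...a_n = every cyclic rotation of it> embeds in the
   group G = F_{n-1} x Z, where F_{n-1} is the free group on the letters 1,...,n-1.  Writing
   Delta = a_1...a_n, the generators are sent to a_i |-> (i, 0) for i < n and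
   a_n |-> ((1 2 ... (n-1))^-1, 1), so that Delta |-> (1, 1) is central.  All of this
   works for n >= 2. *)

text \<open>Elements of a free group are freely reduced words over nonzero integers, the letter
  \<open>-l\<close> being the inverse of \<open>l\<close>; \<open>cancel_letter a w\<close> multiplies \<open>w\<close> by the letter \<open>a\<close> on the left.\<close>
fun cancel_letter :: "int \<Rightarrow> int list \<Rightarrow> int list" where
  "cancel_letter a [] = [a]"
| "cancel_letter a (b # w) = (if b = - a then w else a # b # w)"

definition fmult :: "int list \<Rightarrow> int list \<Rightarrow> int list" where
  "fmult g h = foldr cancel_letter g h"

fun reduced :: "int list \<Rightarrow> bool" where
  "reduced [] = True"
| "reduced [a] = True"
| "reduced (a # b # w) = (b \<noteq> - a \<and> reduced (b # w))"

definition finv :: "int list \<Rightarrow> int list" where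
  "finv g = rev (map uminus g)"

lemma reduced_iff: "reduced g \<longleftrightarrow> (\<forall>i. Suc i < length g \<longrightarrow> g ! Suc i \<noteq> - (g ! i))"
proof (induction g rule: reduced.induct)
  case (3 a b w)
  have "(\<forall>i. Suc i < length (a # b # w) \<longrightarrow> (a # b # w) ! Suc i \<noteq> - ((a # b # w) ! i)) \<longleftrightarrow>
        b \<noteq> - a \<and> (\<forall>i. Suc i < length (b # w) \<longrightarrow> (b # w) ! Suc i \<noteq> - ((b # w) ! i))"
    by (auto simp: All_less_Suc2 less_Suc_eq_0_disj)
  then show ?case using 3 by simp
qed auto

lemma reduced_finv: "reduced g \<Longrightarrow> reduced (finv g)"
  unfolding reduced_iff finv_def
proof (intro allI impI)
  fix i assume all: "\<forall>i. Suc i < length g \<longrightarrow> g ! Suc i \<noteq> - (g ! i)" and i: "Suc i < length (rev (map uminus g))"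
  define j where "j = length g - Suc (Suc i)"
  have j: "Suc j < length g" "Suc j = length g - Suc i" using i by (auto simp: j_def)
  then have "g ! Suc j \<noteq> - (g ! j)" using all by blast
  then show "rev (map uminus g) ! Suc i \<noteq> - (rev (map uminus g) ! i)"
    using i j by (auto simp: rev_nth j_def)
qed

lemma reduced_tl: "reduced (a # w) \<Longrightarrow> reduced w"
  by (cases w) auto

lemma reduced_cancel_letter: "reduced w \<Longrightarrow> reduced (cancel_letter a w)"
  by (cases w) (auto intro: reduced_tl)

lemma set_cancel_letter: "set (cancel_letter a w) \<subseteq> insert a (set w)"
  by (cases w) auto

lemma cancel_letter_reduced_Cons: "reduced (a # w) \<Longrightarrow> cancel_letter a w = a # w"
  by (cases w) auto

lemma cancel_letter_inverse: "reduced w \<Longrightarrow> cancel_letter a (cancel_letter (- a) w) = w"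
  by (cases w rule: reduced.cases) auto

lemma fmult_simps [simp]:
  "fmult [] h = h"
  "fmult (a # g) h = cancel_letter a (fmult g h)"
  "fmult (g @ g') h = fmult g (fmult g' h)"
  by (auto simp: fmult_def)

lemma reduced_fmult: "reduced h \<Longrightarrow> reduced (fmult g h)"
  by (induction g) (auto intro: reduced_cancel_letter)

lemma set_fmult: "set (fmult g h) \<subseteq> set g \<union> set h"
  by (induction g) (use set_cancel_letter in fastforce)+

lemma fmult_cancel_letter: "reduced z \<Longrightarrow> fmult (cancel_letter a h) z = cancel_letter a (fmult h z)"
  using cancel_letter_inverse[of _ "- a"] by (cases h) (auto simp: cancel_letter_inverse reduced_fmult)

lemma fmult_assoc: "reduced z \<Longrightarrow> fmult (fmult g h) z = fmult g (fmult h z)"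
  by (induction g) (auto simp: fmult_cancel_letter)

lemma fmult_reduced_append: "reduced (g @ z) \<Longrightarrow> fmult g z = g @ z"
proof (induction g)
  case (Cons a g)
  then have "reduced (g @ z)" by (auto intro: reduced_tl)
  with Cons show ?case by (simp add: cancel_letter_reduced_Cons)
qed simp

lemma fmult_Nil: "reduced g \<Longrightarrow> fmult g [] = g"
  using fmult_reduced_append[of g "[]"] by simp

lemma fmult_finv_cancel: "reduced z \<Longrightarrow> fmult (finv g) (fmult g z) = z"
  using cancel_letter_inverse[of _ "- _"]
  by (induction g arbitrary: z) (auto simp: finv_def reduced_fmult)

lemma finv_finv [simp]: "finv (finv g) = g"
  by (simp add: finv_def rev_map)

lemma fmult_finv_left: "reduced g \<Longrightarrow> fmult (finv g) g = []"
  using fmult_finv_cancel[of "[]" g] by (simp add: fmult_Nil)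

lemma fmult_finv_right: "reduced g \<Longrightarrow> fmult g (finv g) = []"
  using fmult_finv_left[of "finv g"] by (simp add: reduced_finv)

definition fwords :: "int set \<Rightarrow> int list set" where
  "fwords L = {g. reduced g \<and> set g \<subseteq> L}"

text \<open>The direct product \<open>F(L) \<times> \<int>\<close> of the free group on the letters \<open>L\<close> (taken up to sign)
  with the integers.\<close>
definition FZ :: "int set \<Rightarrow> (int list \<times> int) monoid" where
  "FZ L = \<lparr>carrier = fwords L \<times> UNIV, monoid.mult = (\<lambda>(g, a) (h, b). (fmult g h, a + b)), one = ([], 0)\<rparr>"

lemma FZ_simps [simp]:
  "carrier (FZ L) = fwords L \<times> UNIV"
  "(g, a) \<otimes>\<^bsub>FZ L\<^esub> (h, b) = (fmult g h, a + b)"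
  "\<one>\<^bsub>FZ L\<^esub> = ([], 0)"
  by (auto simp: FZ_def)

lemma fwords_reduced: "g \<in> fwords L \<Longrightarrow> reduced g"
  by (simp add: fwords_def)

lemma fwords_fmult: "g \<in> fwords L \<Longrightarrow> h \<in> fwords L \<Longrightarrow> fmult g h \<in> fwords L"
  unfolding fwords_def using reduced_fmult set_fmult by blast

lemma fwords_finv:
  assumes "uminus ` L \<subseteq> L" "g \<in> fwords L" shows "finv g \<in> fwords L"
  using assms reduced_finv by (auto simp: fwords_def finv_def)

lemma group_FZ:
  assumes L: "uminus ` L \<subseteq> L" shows "group (FZ L)"
proof (rule groupI)
  fix x y assume "x \<in> carrier (FZ L)" "y \<in> carrier (FZ L)"
  then show "x \<otimes>\<^bsub>FZ L\<^esub> y \<in> carrier (FZ L)" by (cases x, cases y) (auto intro: fwords_fmult)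
next
  fix x y z assume "x \<in> carrier (FZ L)" "y \<in> carrier (FZ L)" "z \<in> carrier (FZ L)"
  then show "x \<otimes>\<^bsub>FZ L\<^esub> y \<otimes>\<^bsub>FZ L\<^esub> z = x \<otimes>\<^bsub>FZ L\<^esub> (y \<otimes>\<^bsub>FZ L\<^esub> z)"
    by (cases x, cases y, cases z) (auto simp: fmult_assoc fwords_reduced)
next
  fix x assume "x \<in> carrier (FZ L)"
  then obtain g a where x: "x = (g, a)" "g \<in> fwords L" by auto
  then show "\<exists>y\<in>carrier (FZ L). y \<otimes>\<^bsub>FZ L\<^esub> x = \<one>\<^bsub>FZ L\<^esub>"
    using fwords_finv[OF L] by (intro bexI[of _ "(finv g, - a)"]) (auto simp: fmult_finv_left fwords_reduced)
qed (auto simp: fwords_def)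

lemma inv_FZ:
  assumes "uminus ` L \<subseteq> L" "g \<in> fwords L" shows "inv\<^bsub>FZ L\<^esub> (g, a) = (finv g, - a)"
  using assms fwords_finv[OF assms]
  by (intro group.inv_equality[OF group_FZ]) (auto simp: fmult_finv_left fwords_reduced)

text \<open>Generators \<open>a\<^sub>1, \<dots>, a\<^sub>n\<close> are the letters \<open>0, \<dots>, n - 1\<close>; \<open>[0..<n]\<close> is \<open>\<Delta>\<close> and
  \<open>delta_pow n k\<close> is \<open>\<Delta>\<^sup>k\<close>.\<close>
definition delta_pow :: "nat \<Rightarrow> nat \<Rightarrow> nat list" where
  "delta_pow n k = concat (replicate k [0..<n])"

lemma delta_pow_simps [simp]:
  "delta_pow n 0 = []"
  "delta_pow n (Suc k) = [0..<n] @ delta_pow n k"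
  by (auto simp: delta_pow_def)

lemma delta_pow_add: "delta_pow n (a + b) = delta_pow n a @ delta_pow n b"
  by (induction a) auto

lemma set_delta_pow: "set (delta_pow n k) \<subseteq> {0..<n}"
  by (induction k) auto

lemma sn_eq_context: "sn_eq n u v \<Longrightarrow> sn_eq n (p @ u @ q) (p @ v @ q)"
proof (induction rule: sn_eq.induct)
  case (rel u v p' q')
  then show ?case using sn_eq.rel[of n u v "p @ p'" "q' @ q"] by simp
qed (auto intro: sn_eq.intros)

lemmas sn_eq_trans [trans] = sn_eq.trans

lemma sn_eq_append_right: "sn_eq n u v \<Longrightarrow> sn_eq n (u @ q) (v @ q)"
  using sn_eq_context[of n u v "[]" q] by simp

lemma sn_eq_append_left: "sn_eq n u v \<Longrightarrow> sn_eq n (p @ u) (p @ v)"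
  using sn_eq_context[of n u v p "[]"] by simp

lemma sn_eq_length: "sn_eq n u v \<Longrightarrow> length u = length v"
  by (induction rule: sn_eq.induct) (auto simp: sn_rel_def)

lemma sn_eq_rotate: "sn_eq n (p @ [0..<n] @ q) (p @ rotate k [0..<n] @ q)"
proof (cases "n = 0")
  case False
  then have "sn_rel n [0..<n] (rotate (k mod n) [0..<n])" unfolding sn_rel_def using mod_less_divisor[of n k] by blast
  then show ?thesis by (simp add: sn_eq.rel rotate_conv_mod[of k])
qed (simp add: sn_eq.refl)

lemma rotate_upt: "j \<le> n \<Longrightarrow> rotate j [0..<n] = [j..<n] @ [0..<j]"
  by (cases "j = n") (simp_all add: rotate_drop_take)

lemma sn_eq_rotate_upt: "j \<le> n \<Longrightarrow> sn_eq n [0..<n] ([j..<n] @ [0..<j])"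
  using sn_eq_rotate[of n "[]" "[]" j] rotate_upt[of j n] by simp

text \<open>Each generator commutes with \<open>\<Delta>\<close>: \<open>a\<^sub>i \<Delta> \<equiv> a\<^sub>i a\<^sub>i\<^sub>+\<^sub>1\<cdots>a\<^sub>n a\<^sub>1\<cdots>a\<^sub>i \<equiv> \<Delta> a\<^sub>i\<close>.\<close>
lemma letter_delta_comm:
  assumes i: "i < n" shows "sn_eq n (i # [0..<n]) ([0..<n] @ [i])"
proof -
  have "sn_eq n (i # [0..<n]) ([i] @ [Suc i..<n] @ [0..<Suc i])"
    using sn_eq_append_left[OF sn_eq_rotate_upt[of "Suc i" n], of "[i]"] i by simp
  also have "[i] @ [Suc i..<n] @ [0..<Suc i] = ([i..<n] @ [0..<i]) @ [i]"
    using i by (simp add: upt_conv_Cons)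
  finally show ?thesis
    using sn_eq_append_right[OF sn_eq.sym[OF sn_eq_rotate_upt[of i n]], of "[i]"] i
    by (auto intro: sn_eq.trans)
qed

lemma delta_central: "set w \<subseteq> {0..<n} \<Longrightarrow> sn_eq n (w @ [0..<n]) ([0..<n] @ w)"
proof (induction w)
  case (Cons a w)
  then have "sn_eq n ([a] @ w @ [0..<n]) ([a] @ [0..<n] @ w)"
    by (intro sn_eq_append_left) auto
  moreover have "sn_eq n (([a] @ [0..<n]) @ w) (([0..<n] @ [a]) @ w)"
    using Cons.prems by (intro sn_eq_append_right) (simp add: letter_delta_comm)
  ultimately show ?case by (auto intro: sn_eq.trans)
qed (simp add: sn_eq.refl)

lemma delta_pow_central: "set w \<subseteq> {0..<n} \<Longrightarrow> sn_eq n (w @ delta_pow n k) (delta_pow n k @ w)"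
proof (induction k)
  case (Suc k)
  have "sn_eq n (w @ [0..<n] @ delta_pow n k) ([0..<n] @ w @ delta_pow n k)"
    using sn_eq_append_right[OF delta_central[OF Suc.prems], of "delta_pow n k"] by simp
  moreover have "sn_eq n ([0..<n] @ w @ delta_pow n k) ([0..<n] @ delta_pow n k @ w)"
    by (rule sn_eq_append_left[OF Suc.IH[OF Suc.prems]])
  ultimately show ?case by (auto intro: sn_eq.trans)
qed (simp add: sn_eq.refl)

definition rots :: "nat \<Rightarrow> nat list set" where
  "rots n = {rotate k [0..<n] | k. k < n}"

definition cyclic_run :: "nat \<Rightarrow> nat list \<Rightarrow> bool" where
  "cyclic_run n r \<longleftrightarrow> length r = n \<and> (\<exists>c<n. \<forall>i<n. r ! i = (c + i) mod n)"

lemma rots_iff_cyclic_run: "r \<in> rots n \<longleftrightarrow> cyclic_run n r"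
proof
  assume "r \<in> rots n"
  then obtain k where "k < n" "r = rotate k [0..<n]" by (auto simp: rots_def)
  then show "cyclic_run n r" unfolding cyclic_run_def by (auto simp: nth_rotate intro!: exI[of _ k])
next
  assume "cyclic_run n r"
  then obtain c where c: "c < n" "length r = n" "\<forall>i<n. r ! i = (c + i) mod n"
    by (auto simp: cyclic_run_def)
  have "r = rotate c [0..<n]"
    by (rule nth_equalityI) (use c in \<open>auto simp: nth_rotate\<close>)
  then show "r \<in> rots n" using c by (auto simp: rots_def)
qed

lemma length_rots: "r \<in> rots n \<Longrightarrow> length r = n"
  by (auto simp: rots_def)

lemma upt_in_rots: "0 < n \<Longrightarrow> [0..<n] \<in> rots n"
  unfolding rots_def by (rule CollectI, rule exI[of _ 0]) simp

text \<open>Two rotations of \<open>\<Delta>\<close> overlapping in a nonempty word \<open>r\<^sub>1\<close> as \<open>y r\<^sub>1\<close> and \<open>r\<^sub>1 r\<^sub>2\<close>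
  force \<open>y = r\<^sub>2\<close>; this makes the deletion of rotations confluent.\<close>
lemma cyclic_run_overlap:
  assumes "cyclic_run n (y @ r1)" "cyclic_run n (r1 @ r2)" "r1 \<noteq> []"
  shows "y = r2"
proof -
  obtain c where c: "c < n" "length (y @ r1) = n" "\<forall>i<n. (y @ r1) ! i = (c + i) mod n"
    using assms(1) by (auto simp: cyclic_run_def)
  obtain d where d: "d < n" "length (r1 @ r2) = n" "\<forall>i<n. (r1 @ r2) ! i = (d + i) mod n"
    using assms(2) by (auto simp: cyclic_run_def)
  have ly: "length y = length r2" using c d by simp
  have "(y @ r1) ! length y = (r1 @ r2) ! 0" using assms(3) by (simp add: nth_append)
  then have dc: "d mod n = (c + length y) mod n" using c d assms(3) by auto
  show ?thesis
  proof (rule nth_equalityI)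
    fix i assume i: "i < length y"
    have "r2 ! i = (r1 @ r2) ! (length r1 + i)" by (simp add: nth_append)
    also have "\<dots> = (d + (length r1 + i)) mod n" by (rule d(3)[rule_format]) (use d(2) i ly in simp)
    also have "\<dots> = (c + length y + length r1 + i) mod n"
      using dc by (metis add.assoc mod_add_left_eq)
    also have "\<dots> = (c + i + n) mod n" using c by (simp add: algebra_simps)
    also have "\<dots> = (c + i) mod n" by simp
    also have "\<dots> = (y @ r1) ! i" using c i by simp
    finally show "y ! i = r2 ! i" using i by (simp add: nth_append)
  qed (rule ly)
qed

definition rot_free :: "nat \<Rightarrow> nat list \<Rightarrow> bool" where
  "rot_free n s \<longleftrightarrow> \<not> (\<exists>x r y. s = x @ r @ y \<and> r \<in> rots n)"

definition ends_with_rot :: "nat \<Rightarrow> nat list \<Rightarrow> bool" where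
  "ends_with_rot n t \<longleftrightarrow> n \<le> length t \<and> drop (length t - n) t \<in> rots n"

definition nf_step :: "nat \<Rightarrow> nat list \<Rightarrow> nat \<Rightarrow> nat list" where
  "nf_step n s a = (if ends_with_rot n (s @ [a]) then take (length (s @ [a]) - n) (s @ [a]) else s @ [a])"

definition nf :: "nat \<Rightarrow> nat list \<Rightarrow> nat list" where
  "nf n w = foldl (nf_step n) [] w"

lemma rot_free_prefix: "rot_free n (s @ t) \<Longrightarrow> rot_free n s"
  unfolding rot_free_def by (metis append.assoc)

lemma rot_free_not_ends_with_rot: "rot_free n t \<Longrightarrow> \<not> ends_with_rot n t"
  unfolding rot_free_def ends_with_rot_def by (metis append.right_neutral append_take_drop_id)

lemma rot_free_snoc:
  assumes s: "rot_free n s" and a: "\<not> ends_with_rot n (s @ [a])"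
  shows "rot_free n (s @ [a])"
  unfolding rot_free_def
proof
  assume "\<exists>x r y. s @ [a] = x @ r @ y \<and> r \<in> rots n"
  then obtain x r y where xr: "s @ [a] = x @ r @ y" "r \<in> rots n" by blast
  show False
  proof (cases "y = []")
    case True
    then show False using a xr length_rots[OF xr(2)] by (auto simp: ends_with_rot_def)
  next
    case False
    then obtain y' where "y = y' @ [a]" using xr
      by (metis append_assoc append_butlast_last_id last_appendR last_snoc)
    then have "s = x @ r @ y'" using xr by simp
    then show False using s xr by (auto simp: rot_free_def)
  qed
qed

lemma rot_free_nf_step: "rot_free n s \<Longrightarrow> rot_free n (nf_step n s a)"
proof (cases "ends_with_rot n (s @ [a])")
  case True
  assume s: "rot_free n s"
  have "0 < n" using True by (auto simp: ends_with_rot_def rots_def)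
  then have "take (length (s @ [a]) - n) (s @ [a]) = take (length (s @ [a]) - n) s" by simp
  then show ?thesis using True s rot_free_prefix[of n "take _ s"]
    by (simp add: nf_step_def) (metis append_take_drop_id)
qed (simp add: nf_step_def rot_free_snoc)

lemma nf_rot_free: "rot_free n (nf n w)"
proof -
  have "rot_free n (foldl (nf_step n) s w)" if "rot_free n s" for s
    using that by (induction w arbitrary: s) (auto intro: rot_free_nf_step)
  moreover have "rot_free n []" unfolding rot_free_def
    by (auto simp: rots_def dest: arg_cong[of _ _ length])
  ultimately show ?thesis unfolding nf_def by simp
qed

lemma foldl_nf_step_rot_free: "rot_free n (s @ t) \<Longrightarrow> foldl (nf_step n) s t = s @ t"
proof (induction t arbitrary: s)
  case (Cons a t)
  have "rot_free n (s @ [a])" using Cons.prems rot_free_prefix[of n "s @ [a]" t] by simp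
  then have "nf_step n s a = s @ [a]" using rot_free_not_ends_with_rot by (simp add: nf_step_def)
  then show ?case using Cons.IH[of "s @ [a]"] Cons.prems by simp
qed simp

lemma rot_free_append:
  assumes "rot_free n s" "\<And>i. 0 < i \<Longrightarrow> i \<le> length t \<Longrightarrow> \<not> ends_with_rot n (s @ take i t)"
  shows "rot_free n (s @ t)"
  using assms
proof (induction t arbitrary: s)
  case (Cons a t)
  have "rot_free n (s @ [a])" using Cons.prems(2)[of 1] by (intro rot_free_snoc[OF Cons.prems(1)]) simp
  moreover have "\<not> ends_with_rot n ((s @ [a]) @ take i t)" if "0 < i" "i \<le> length t" for i
    using Cons.prems(2)[of "Suc i"] that by simp
  ultimately show ?case using Cons.IH[of "s @ [a]"] by simp
qed simp

lemma first_rot_overlap: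
  assumes s: "rot_free n s" and r: "r \<in> rots n" and j: "0 < j" "j \<le> n"
    and end_rot: "ends_with_rot n (s @ take j r)"
  defines "t \<equiv> s @ take j r"
  shows "take (length t - n) t @ drop j r = s"
proof (cases "j = n")
  case True
  then show ?thesis using length_rots[OF r] by (simp add: t_def)
next
  case False
  have lr: "length r = n" using length_rots[OF r] .
  have lt: "length t = length s + j" and ln: "n \<le> length t"
    using j lr end_rot by (auto simp: t_def ends_with_rot_def)
  define y where "y = drop (length s - (n - j)) s"
  have tk: "take (length t - n) t = take (length s - (n - j)) s" using ln lt False j by (simp add: t_def)
  have "drop (length t - n) t = y @ take j r" using ln lt False j by (simp add: t_def y_def)
  then have "cyclic_run n (y @ take j r)"
    using end_rot rots_iff_cyclic_run by (simp add: ends_with_rot_def t_def)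
  moreover have "cyclic_run n (take j r @ drop j r)" using r rots_iff_cyclic_run by simp
  moreover have "take j r \<noteq> []" using j lr by (cases r) auto
  ultimately have "y = drop j r" by (rule cyclic_run_overlap)
  then show ?thesis by (metis append_take_drop_id tk y_def)
qed

lemma foldl_nf_step_rot:
  assumes s: "rot_free n s" and r: "r \<in> rots n"
  shows "foldl (nf_step n) s r = s"
proof -
  have lr: "length r = n" using length_rots[OF r] .
  define P where "P j \<longleftrightarrow> ends_with_rot n (s @ take j r)" for j
  have "P n" unfolding P_def ends_with_rot_def using lr r by simp
  define j where "j = (LEAST j. P j)"
  have Pj: "P j" and jn: "j \<le> n" unfolding j_def using \<open>P n\<close> by (auto intro: LeastI Least_le)
  have j0: "0 < j" using Pj s rot_free_not_ends_with_rot by (auto simp: P_def intro: Nat.gr0I)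
  obtain i where i: "j = Suc i" using j0 gr0_implies_Suc by blast
  have ir: "i < length r" using i jn lr by simp
  have "\<not> P k" if "k < j" for k using that not_less_Least unfolding j_def by blast
  then have "rot_free n (s @ take i r)"
    using i by (intro rot_free_append[OF s]) (auto simp: P_def min_def)
  then have read_i: "foldl (nf_step n) s (take i r) = s @ take i r"
    by (rule foldl_nf_step_rot_free)
  have tk: "take j r = take i r @ [r ! i]" using ir i by (simp add: take_Suc_conv_app_nth)
  define t where "t = s @ take j r"
  have delete: "nf_step n (s @ take i r) (r ! i) = take (length t - n) t"
    using Pj tk by (simp add: nf_step_def P_def t_def)
  have "r = take i r @ [r ! i] @ drop j r" using id_take_nth_drop[OF ir] i by simp
  then have "foldl (nf_step n) s r = foldl (nf_step n) (take (length t - n) t) (drop j r)"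
    by (metis foldl_append foldl_Cons foldl_Nil read_i delete)
  also have "\<dots> = s"
    using first_rot_overlap[OF s r j0 jn] Pj foldl_nf_step_rot_free s
    by (simp add: P_def t_def)
  finally show ?thesis .
qed

lemma nf_append: "nf n (u @ v) = foldl (nf_step n) (nf n u) v"
  by (simp add: nf_def)

lemma nf_delete_rot: "r \<in> rots n \<Longrightarrow> nf n (p @ r @ q) = nf n (p @ q)"
  by (simp only: nf_append append.assoc[symmetric] foldl_nf_step_rot nf_rot_free)

lemma nf_sn_eq: "sn_eq n u v \<Longrightarrow> nf n u = nf n v"
proof (induction rule: sn_eq.induct)
  case (rel u v p q)
  then have "u \<in> rots n" "v \<in> rots n" using upt_in_rots[of n] by (auto simp: sn_rel_def rots_def)
  then show ?case by (simp add: nf_delete_rot)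
qed auto

lemma nf_delta_pow: "0 < n \<Longrightarrow> nf n (u @ delta_pow n k) = nf n u"
  by (induction k) (simp_all add: nf_delete_rot[OF upt_in_rots])

lemma nf_step_decomp:
  "\<exists>d. sn_eq n (s @ [a]) (nf_step n s a @ delta_pow n d) \<and> length (s @ [a]) = length (nf_step n s a) + d * n"
proof (cases "ends_with_rot n (s @ [a])")
  case True
  define t where "t = s @ [a]"
  have ln: "n \<le> length t" and "drop (length t - n) t \<in> rots n"
    using True by (auto simp: ends_with_rot_def t_def)
  then obtain k where k: "drop (length t - n) t = rotate k [0..<n]" by (auto simp: rots_def)
  have "sn_eq n (take (length t - n) t @ [0..<n] @ []) (take (length t - n) t @ rotate k [0..<n] @ [])"
    by (rule sn_eq_rotate)
  then have "sn_eq n t (take (length t - n) t @ delta_pow n 1)"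
    using k by (metis append_Nil2 append_take_drop_id delta_pow_simps sn_eq.sym One_nat_def)
  then show ?thesis using True ln by (intro exI[of _ 1]) (simp_all add: nf_step_def t_def)
qed (rule exI[of _ 0], simp add: nf_step_def sn_eq.refl)

lemma nf_decomp:
  "set w \<subseteq> {0..<n} \<Longrightarrow> \<exists>k. sn_eq n w (nf n w @ delta_pow n k) \<and> length w = length (nf n w) + k * n"
proof (induction w rule: rev_induct)
  case (snoc a w)
  then obtain k where k: "sn_eq n w (nf n w @ delta_pow n k)" "length w = length (nf n w) + k * n"
    by auto
  obtain d where d: "sn_eq n (nf n w @ [a]) (nf n (w @ [a]) @ delta_pow n d)"
    "length (nf n w @ [a]) = length (nf n (w @ [a])) + d * n"
    using nf_step_decomp[of n "nf n w" a] by (auto simp: nf_def)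
  have "sn_eq n (w @ [a]) (nf n w @ delta_pow n k @ [a])"
    using sn_eq_append_right[OF k(1), of "[a]"] by simp
  also have "sn_eq n \<dots> ((nf n w @ [a]) @ delta_pow n k)"
    using sn_eq_append_left[OF sn_eq.sym[OF delta_pow_central[of "[a]" n k]]] snoc.prems by simp
  also have "sn_eq n \<dots> (nf n (w @ [a]) @ delta_pow n (d + k))"
    using sn_eq_append_right[OF d(1)] by (simp add: delta_pow_add)
  finally show ?case using k(2) d(2) by (intro exI[of _ "d + k"]) (auto simp: algebra_simps)
qed (auto simp: nf_def intro!: exI[of _ 0] sn_eq.refl)

lemma sn_eq_cancel_delta_pow:
  assumes n: "0 < n" and u: "set u \<subseteq> {0..<n}" and v: "set v \<subseteq> {0..<n}"
    and e: "sn_eq n (u @ delta_pow n k) (v @ delta_pow n k)"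
  shows "sn_eq n u v"
proof -
  have nf_eq: "nf n u = nf n v" using nf_sn_eq[OF e] nf_delta_pow[OF n] by simp
  have len: "length u = length v" using sn_eq_length[OF e] by simp
  obtain a where a: "sn_eq n u (nf n u @ delta_pow n a)" "length u = length (nf n u) + a * n"
    using nf_decomp[OF u] by blast
  obtain b where b: "sn_eq n v (nf n v @ delta_pow n b)" "length v = length (nf n v) + b * n"
    using nf_decomp[OF v] by blast
  have "length (nf n u) = length (nf n v)" using nf_eq by simp
  then have "a * n = b * n" using a(2) b(2) len by linarith
  then have "a = b" using n by simp
  then show ?thesis using a b nf_eq by (metis sn_eq.sym sn_eq.trans)
qed

lemma weval_Nil [simp]: "weval G x [] = \<one>\<^bsub>G\<^esub>"
  by (simp add: weval_def)

lemma weval_Cons [simp]: "weval G x (a # w) = x a \<otimes>\<^bsub>G\<^esub> weval G x w"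
  by (simp add: weval_def)

lemma weval_closed: "monoid G \<Longrightarrow> (\<And>i. x i \<in> carrier G) \<Longrightarrow> weval G x w \<in> carrier G"
  by (induction w) (auto intro: monoid.m_closed monoid.one_closed)

lemma weval_append:
  assumes "monoid G" "\<And>i. x i \<in> carrier G"
  shows "weval G x (u @ v) = weval G x u \<otimes>\<^bsub>G\<^esub> weval G x v"
  using weval_closed[OF assms] by (induction u) (auto simp: monoid.l_one monoid.m_assoc assms)

lemma weval_single: "monoid G \<Longrightarrow> x i \<in> carrier G \<Longrightarrow> weval G x [i] = x i"
  by (simp add: monoid.r_one)

lemma weval_sn_eq:
  assumes G: "monoid G" "\<And>i. x i \<in> carrier G"
    and rot: "\<And>k. weval G x (rotate k [0..<n]) = weval G x [0..<n]"
  shows "sn_eq n u v \<Longrightarrow> weval G x u = weval G x v"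
proof (induction rule: sn_eq.induct)
  case (rel u v p q)
  then have "weval G x u = weval G x v" using rot by (auto simp: sn_rel_def)
  then show ?case by (simp add: weval_append[OF G])
qed auto

lemma weval_rotate_central:
  assumes G: "group G" "\<And>i. x i \<in> carrier G"
    and central: "\<And>y. y \<in> carrier G \<Longrightarrow> weval G x [0..<n] \<otimes>\<^bsub>G\<^esub> y = y \<otimes>\<^bsub>G\<^esub> weval G x [0..<n]"
  shows "weval G x (rotate k [0..<n]) = weval G x [0..<n]"
proof -
  interpret group G by (rule G(1))
  note closed = weval_closed[OF is_monoid G(2)] and app = weval_append[OF is_monoid G(2)]
  define a b z where "a = weval G x (take (k mod n) [0..<n])"
    and "b = weval G x (drop (k mod n) [0..<n])" and "z = weval G x [0..<n]"
  have ab: "a \<otimes>\<^bsub>G\<^esub> b = z" unfolding a_def b_def z_def by (simp only: app[symmetric] append_take_drop_id)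
  have "b = inv\<^bsub>G\<^esub> a \<otimes>\<^bsub>G\<^esub> z" using ab closed by (simp add: a_def b_def z_def inv_solve_left)
  then have "b \<otimes>\<^bsub>G\<^esub> a = inv\<^bsub>G\<^esub> a \<otimes>\<^bsub>G\<^esub> (a \<otimes>\<^bsub>G\<^esub> z)"
    using central closed by (simp add: a_def z_def m_assoc)
  also have "\<dots> = z" using closed by (simp add: a_def z_def flip: m_assoc)
  finally have "b \<otimes>\<^bsub>G\<^esub> a = z" .
  moreover have "rotate k [0..<n] = drop (k mod n) [0..<n] @ take (k mod n) [0..<n]"
    by (simp add: rotate_drop_take)
  ultimately show ?thesis unfolding a_def b_def z_def by (simp only: app)
qed

lemma sn_cancellative_if_faithful:
  assumes G: "group G" "\<And>i. x i \<in> carrier G"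
    and faithful: "\<And>u v. u \<in> sn_words n \<Longrightarrow> v \<in> sn_words n \<Longrightarrow> weval G x u = weval G x v \<longleftrightarrow> sn_eq n u v"
    and words: "u \<in> sn_words n" "v \<in> sn_words n" "w \<in> sn_words n"
  shows "(sn_eq n (u @ w) (v @ w) \<longrightarrow> sn_eq n u v) \<and> (sn_eq n (w @ u) (w @ v) \<longrightarrow> sn_eq n u v)"
proof -
  interpret group G by (rule G(1))
  note closed = weval_closed[OF is_monoid G(2)] and app = weval_append[OF is_monoid G(2)]
  have app_words: "p @ q \<in> sn_words n" if "p \<in> sn_words n" "q \<in> sn_words n" for p q
    using that by (simp add: sn_words_def)
  have eval_eq: "weval G x u = weval G x v"
    if "sn_eq n (u @ w) (v @ w) \<or> sn_eq n (w @ u) (w @ v)"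
  proof -
    have "weval G x (u @ w) = weval G x (v @ w) \<or> weval G x (w @ u) = weval G x (w @ v)"
      using that faithful[OF app_words app_words] words by blast
    then show ?thesis using closed by (auto simp: app)
  qed
  show ?thesis using eval_eq faithful words by blast
qed

definition letters :: "nat \<Rightarrow> int set" where
  "letters n = {l. l \<noteq> 0 \<and> \<bar>l\<bar> < int n}"

abbreviation Gn :: "nat \<Rightarrow> (int list \<times> int) monoid" where
  "Gn n \<equiv> FZ (letters n)"

lemma letters_uminus: "uminus ` letters n \<subseteq> letters n"
  by (auto simp: letters_def)

lemma group_Gn: "group (Gn n)"
  by (rule group_FZ[OF letters_uminus])

lemma inv_Gn: "g \<in> fwords (letters n) \<Longrightarrow> inv\<^bsub>Gn n\<^esub> (g, a) = (finv g, - a)"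
  by (rule inv_FZ[OF letters_uminus])

text \<open>The free word \<open>1 2 \<cdots> (n - 1)\<close>, the image of \<open>a\<^sub>1\<cdots>a\<^sub>n\<^sub>-\<^sub>1\<close>.\<close>
definition pos_prefix :: "nat \<Rightarrow> int list" where
  "pos_prefix n = map int [1..<n]"

text \<open>Images of the generators: \<open>a\<^sub>i \<mapsto> (i, 0)\<close> for \<open>i < n\<close> and
  \<open>a\<^sub>n \<mapsto> ((1 2 \<cdots> (n - 1))\<^sup>-\<^sup>1, 1)\<close>; letters beyond \<open>n\<close> are sent to the identity.\<close>
definition gen :: "nat \<Rightarrow> nat \<Rightarrow> int list \<times> int" where
  "gen n i = (if i < n - 1 then ([int i + 1], 0)
              else if i = n - 1 then (finv (pos_prefix n), 1) else ([], 0))"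

lemma gen_low: "i < n - 1 \<Longrightarrow> gen n i = ([int i + 1], 0)"
  by (simp add: gen_def)

lemma reduced_sign: "(\<forall>l\<in>set g. 0 < l) \<or> (\<forall>l\<in>set g. l < 0) \<Longrightarrow> reduced g"
  by (induction g rule: reduced.induct) auto

lemma pos_prefix_fwords: "pos_prefix n \<in> fwords (letters n)"
  by (auto simp: pos_prefix_def fwords_def letters_def intro!: reduced_sign)

lemma gen_closed: "gen n i \<in> carrier (Gn n)"
  using fwords_finv[OF letters_uminus pos_prefix_fwords]
  by (auto simp: gen_def fwords_def letters_def)

lemma weval_gen_append:
  "weval (Gn n) (gen n) (u @ v) = weval (Gn n) (gen n) u \<otimes>\<^bsub>Gn n\<^esub> weval (Gn n) (gen n) v"
  by (rule weval_append[OF group.is_monoid[OF group_Gn] gen_closed])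

lemma weval_gen_single: "weval (Gn n) (gen n) [i] = gen n i"
  by (rule weval_single[OF group.is_monoid[OF group_Gn] gen_closed])

lemma weval_gen_closed: "weval (Gn n) (gen n) w \<in> carrier (Gn n)"
  by (rule weval_closed[OF group.is_monoid[OF group_Gn] gen_closed])

lemma weval_gen_prefix: "k \<le> n - 1 \<Longrightarrow> weval (Gn n) (gen n) [0..<k] = (pos_prefix (Suc k), 0)"
proof (induction k)
  case (Suc k)
  have "weval (Gn n) (gen n) [0..<Suc k] = (pos_prefix (Suc k), 0) \<otimes>\<^bsub>Gn n\<^esub> gen n k"
    using Suc by (simp add: weval_gen_append weval_gen_single del: weval_Cons)
  also have "\<dots> = (pos_prefix (Suc k) @ [int k + 1], 0)"
    using Suc.prems by (simp add: gen_low fmult_reduced_append pos_prefix_def reduced_sign)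
  finally show ?case by (simp add: pos_prefix_def)
qed (simp add: pos_prefix_def)

lemma weval_delta: "2 \<le> n \<Longrightarrow> weval (Gn n) (gen n) [0..<n] = ([], 1)"
proof -
  assume n: "2 \<le> n"
  have "[0..<n] = [0..<n - 1] @ [n - 1]" using n by (cases n) auto
  then have "weval (Gn n) (gen n) [0..<n] = (pos_prefix n, 0) \<otimes>\<^bsub>Gn n\<^esub> (finv (pos_prefix n), 1)"
    using n weval_gen_prefix[of "n - 1" n] fwords_finv[OF letters_uminus pos_prefix_fwords]
    by (simp add: weval_gen_append weval_gen_single gen_def del: weval_Cons)
  then show ?thesis using fmult_finv_right[OF fwords_reduced[OF pos_prefix_fwords]] by simp
qed

lemma FZ_centre: "x \<in> carrier (FZ L) \<Longrightarrow> ([], e) \<otimes>\<^bsub>FZ L\<^esub> x = x \<otimes>\<^bsub>FZ L\<^esub> ([], e)"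
  by (cases x) (auto simp: fmult_Nil fwords_reduced)

lemma weval_rotate_delta:
  assumes "2 \<le> n" shows "weval (Gn n) (gen n) (rotate k [0..<n]) = ([], 1)"
proof -
  have "weval (Gn n) (gen n) (rotate k [0..<n]) = weval (Gn n) (gen n) [0..<n]"
    by (rule weval_rotate_central[OF group_Gn gen_closed]) (simp add: weval_delta[OF assms] FZ_centre)
  then show ?thesis using weval_delta[OF assms] by simp
qed

text \<open>The word \<open>a\<^sub>j\<^sub>+\<^sub>2\<cdots>a\<^sub>n a\<^sub>1\<cdots>a\<^sub>j\<close> represents \<open>a\<^sub>j\<^sub>+\<^sub>1\<^sup>-\<^sup>1 \<Delta>\<close> (letters are indexed from 0).\<close>
definition co_letter :: "nat \<Rightarrow> nat \<Rightarrow> nat list" where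
  "co_letter n j = [Suc j..<n] @ [0..<j]"

lemma Cons_co_letter: "j < n \<Longrightarrow> j # co_letter n j = rotate j [0..<n]"
  by (subst rotate_upt) (auto simp: co_letter_def upt_conv_Cons)

lemma co_letter_snoc: "j < n \<Longrightarrow> co_letter n j @ [j] = rotate (Suc j) [0..<n]"
  by (subst rotate_upt) (simp_all add: co_letter_def)

text \<open>Indeed, \<open>a\<^sub>j\<^sub>+\<^sub>1\<close> times this word is a rotation of \<open>\<Delta>\<close>, so it evaluates to \<open>(-(j + 1), 1)\<close>.\<close>
lemma weval_co_letter:
  assumes n: "2 \<le> n" and j: "j < n - 1"
  shows "weval (Gn n) (gen n) (co_letter n j) = ([- (int j + 1)], 1)"
proof -
  interpret group "Gn n" by (rule group_Gn)
  have "weval (Gn n) (gen n) (j # co_letter n j) = ([], 1)"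
    using Cons_co_letter[of j n] j weval_rotate_delta[OF n] by simp
  then have "gen n j \<otimes>\<^bsub>Gn n\<^esub> weval (Gn n) (gen n) (co_letter n j) = ([], 1)" by simp
  then have "weval (Gn n) (gen n) (co_letter n j) = inv\<^bsub>Gn n\<^esub> (gen n j) \<otimes>\<^bsub>Gn n\<^esub> ([], 1)"
    using inv_solve_left[OF weval_gen_closed gen_closed, of "([], 1)"] by (simp add: fwords_def)
  then show ?thesis
    using j inv_Gn[of "[int j + 1]" n 0] by (simp add: gen_low fwords_def letters_def finv_def)
qed

text \<open>Canonical words of \<open>S\<^sub>n\<close> for free letters and free words: the letter \<open>l > 0\<close> is \<open>a\<^sub>l\<close>,
  the letter \<open>-l\<close> is represented by the word for \<open>a\<^sub>l\<^sup>-\<^sup>1 \<Delta>\<close>; thus \<open>fword_word n g\<close> stands for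
  \<open>g \<Delta>\<^sup>m\<close> where \<open>m\<close> is the number of negative letters of \<open>g\<close>.\<close>
definition letter_word :: "nat \<Rightarrow> int \<Rightarrow> nat list" where
  "letter_word n l = (if 0 < l then [nat l - 1] else co_letter n (nat (- l) - 1))"

definition fword_word :: "nat \<Rightarrow> int list \<Rightarrow> nat list" where
  "fword_word n g = concat (map (letter_word n) g)"

definition neg_count :: "int list \<Rightarrow> nat" where
  "neg_count g = length (filter (\<lambda>l. l < 0) g)"

lemma fword_word_simps [simp]:
  "fword_word n [] = []"
  "fword_word n (l # g) = letter_word n l @ fword_word n g"
  by (simp_all add: fword_word_def)

lemma letter_word_pos: "letter_word n (int j + 1) = [j]"
  by (simp add: letter_word_def)

lemma letter_word_neg: "letter_word n (- int j - 1) = co_letter n j"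
  by (simp add: letter_word_def nat_add_distrib)

lemma set_fword_word: "set g \<subseteq> letters n \<Longrightarrow> set (fword_word n g) \<subseteq> {0..<n}"
  by (induction g) (auto simp: letter_word_def co_letter_def letters_def)

text \<open>\<open>represents n w g e\<close>: in the group of fractions, the word \<open>w\<close> equals the element \<open>(g, e)\<close>
  of \<open>F \<times> \<int>\<close>, certified inside \<open>S\<^sub>n\<close> by clearing denominators with powers of \<open>\<Delta>\<close>.
  Here \<open>fword_word n g\<close> stands for \<open>(g, neg_count g)\<close>.\<close>
definition represents :: "nat \<Rightarrow> nat list \<Rightarrow> int list \<Rightarrow> int \<Rightarrow> bool" where
  "represents n w g e \<longleftrightarrow> (\<exists>p q. sn_eq n (w @ delta_pow n p) (fword_word n g @ delta_pow n q)
                                \<and> e + int p = int (neg_count g) + int q)"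

lemma rotate_absorb:
  assumes "set w \<subseteq> {0..<n}"
  shows "sn_eq n (rotate k [0..<n] @ w @ delta_pow n q) (w @ delta_pow n (Suc q))"
proof -
  have "sn_eq n (rotate k [0..<n] @ w @ delta_pow n q) ([0..<n] @ w @ delta_pow n q)"
    using sn_eq.sym[OF sn_eq_rotate[of n "[]" "w @ delta_pow n q" k]] by simp
  also have "sn_eq n \<dots> (w @ delta_pow n (Suc q))"
    using sn_eq_append_right[OF sn_eq.sym[OF delta_central[OF assms]], of "delta_pow n q"] by simp
  finally show ?thesis .
qed

text \<open>Multiplying by the word of \<open>l\<close> on the left, either \<open>l\<close> cancels against the head of
  \<open>g\<close> (and the rotation is absorbed as a factor \<open>\<Delta>\<close>), or it is prepended.\<close>
lemma represents_prepend_letter: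
  assumes R: "represents n w g e" and g: "set g \<subseteq> letters n"
    and l: "l \<in> letters n" and d: "d = (if l < 0 then 1 else 0)"
    and rot: "\<exists>k. letter_word n l @ letter_word n (- l) = rotate k [0..<n]"
  shows "represents n (letter_word n l @ w) (cancel_letter l g) (e + d)"
proof -
  obtain p q where pq: "sn_eq n (w @ delta_pow n p) (fword_word n g @ delta_pow n q)"
    "e + int p = int (neg_count g) + int q"
    using R by (auto simp: represents_def)
  have s1: "sn_eq n ((letter_word n l @ w) @ delta_pow n p) (letter_word n l @ fword_word n g @ delta_pow n q)"
    using sn_eq_append_left[OF pq(1)] by simp
  show ?thesis
  proof (cases "\<exists>g'. g = - l # g'")
    case True
    then obtain g' k where g': "g = - l # g'" and k: "letter_word n l @ letter_word n (- l) = rotate k [0..<n]"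
      using rot by blast
    have "set (fword_word n g') \<subseteq> {0..<n}" using g g' set_fword_word by auto
    then have "sn_eq n (letter_word n l @ fword_word n g @ delta_pow n q) (fword_word n g' @ delta_pow n (Suc q))"
      using rotate_absorb[of "fword_word n g'" n k q] g' by (simp add: k[symmetric])
    then have "sn_eq n ((letter_word n l @ w) @ delta_pow n p) (fword_word n g' @ delta_pow n (Suc q))"
      using s1 sn_eq.trans by blast
    moreover have "cancel_letter l g = g'" using g' by simp
    moreover have "int (neg_count g) + d = int (neg_count g') + 1"
      using g' d l by (auto simp: neg_count_def letters_def)
    ultimately show ?thesis using pq(2) unfolding represents_def
      by (intro exI[of _ p] exI[of _ "Suc q"]) auto
  next
    case False
    then have "cancel_letter l g = l # g" by (cases g) auto
    then show ?thesis using s1 pq(2) d unfolding represents_def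
      by (intro exI[of _ p] exI[of _ q]) (auto simp: neg_count_def)
  qed
qed

lemma represents_gen_low:
  assumes j: "j < n - 1" and R: "represents n w g e" and g: "set g \<subseteq> letters n"
  shows "represents n (j # w) (cancel_letter (int j + 1) g) e"
proof -
  have "represents n (letter_word n (int j + 1) @ w) (cancel_letter (int j + 1) g) (e + 0)"
  proof (rule represents_prepend_letter[OF R g])
    show "\<exists>k. letter_word n (int j + 1) @ letter_word n (- (int j + 1)) = rotate k [0..<n]"
      using Cons_co_letter[of j n] j by (auto simp: letter_word_pos letter_word_neg)
  qed (use j in \<open>auto simp: letters_def\<close>)
  then show ?thesis by (simp add: letter_word_pos)
qed

lemma represents_co_letter:
  assumes j: "j < n - 1" and R: "represents n w g e" and g: "set g \<subseteq> letters n"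
  shows "represents n (co_letter n j @ w) (cancel_letter (- (int j + 1)) g) (e + 1)"
proof -
  have "represents n (letter_word n (- (int j + 1)) @ w) (cancel_letter (- (int j + 1)) g) (e + 1)"
  proof (rule represents_prepend_letter[OF R g])
    have "letter_word n (- (int j + 1)) @ letter_word n (- (- (int j + 1))) = co_letter n j @ [j]"
      by (simp add: letter_word_def nat_add_distrib)
    then show "\<exists>k. letter_word n (- (int j + 1)) @ letter_word n (- (- (int j + 1))) = rotate k [0..<n]"
      using co_letter_snoc[of j n] j by (intro exI[of _ "Suc j"]) auto
  qed (use j in \<open>auto simp: letters_def\<close>)
  then show ?thesis by (simp add: letter_word_neg)
qed

text \<open>\<open>co_prefix n k\<close> represents \<open>(a\<^sub>1\<cdots>a\<^sub>k)\<^sup>-\<^sup>1 \<Delta>\<^sup>k\<close>; for \<open>k = n - 1\<close> it is literally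
  \<open>a\<^sub>n \<Delta>\<^sup>n\<^sup>-\<^sup>2\<close>, which is how the last generator is handled.\<close>
fun co_prefix :: "nat \<Rightarrow> nat \<Rightarrow> nat list" where
  "co_prefix n 0 = []"
| "co_prefix n (Suc k) = co_letter n k @ co_prefix n k"

lemma co_prefix_literal: "1 \<le> k \<Longrightarrow> k \<le> n \<Longrightarrow> co_prefix n k = [k..<n] @ delta_pow n (k - 1)"
proof (induction k)
  case (Suc k)
  show ?case
  proof (cases "k = 0")
    case False
    then have "co_prefix n k = [k..<n] @ delta_pow n (k - 1)" using Suc by simp
    moreover have "[0..<k] @ [k..<n] = [0..<n]" using Suc.prems upt_add_eq_append[of 0 k "n - k"] by simp
    moreover have "delta_pow n k = [0..<n] @ delta_pow n (k - 1)" using False by (cases k) auto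
    ultimately show ?thesis by (simp add: co_letter_def)
  qed (simp add: co_letter_def)
qed simp

lemma finv_pos_prefix_Suc: "finv (pos_prefix (Suc (Suc k))) = - (int k + 1) # finv (pos_prefix (Suc k))"
  by (simp add: finv_def pos_prefix_def)

lemma represents_co_prefix:
  assumes "k \<le> n - 1" and R: "represents n w g e" and g: "set g \<subseteq> letters n"
  shows "represents n (co_prefix n k @ w) (fmult (finv (pos_prefix (Suc k))) g) (e + int k)
       \<and> set (fmult (finv (pos_prefix (Suc k))) g) \<subseteq> letters n"
  using assms(1)
proof (induction k)
  case 0 then show ?case using R g by (simp add: finv_def pos_prefix_def)
next
  case (Suc k)
  then have IH: "represents n (co_prefix n k @ w) (fmult (finv (pos_prefix (Suc k))) g) (e + int k)"
    and set_IH: "set (fmult (finv (pos_prefix (Suc k))) g) \<subseteq> letters n" and k: "k < n - 1"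
    by auto
  have "represents n (co_letter n k @ co_prefix n k @ w)
          (cancel_letter (- (int k + 1)) (fmult (finv (pos_prefix (Suc k))) g)) (e + int k + 1)"
    by (rule represents_co_letter[OF k IH set_IH])
  moreover have "set (cancel_letter (- (int k + 1)) (fmult (finv (pos_prefix (Suc k))) g)) \<subseteq> letters n"
    using set_cancel_letter set_IH k by (fastforce simp: letters_def)
  ultimately show ?case by (simp add: finv_pos_prefix_Suc ac_simps)
qed

text \<open>Since \<open>\<Delta>\<close> is central, a factor \<open>\<Delta>\<^sup>k\<close> anywhere in the word only shifts the exponent.\<close>
lemma represents_remove_delta_pow:
  assumes R: "represents n (u @ delta_pow n k @ w) g (e + int k)" and w: "set w \<subseteq> {0..<n}"
  shows "represents n (u @ w) g e"
proof -
  obtain p q where pq: "sn_eq n ((u @ delta_pow n k @ w) @ delta_pow n p) (fword_word n g @ delta_pow n q)"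
    "e + int k + int p = int (neg_count g) + int q"
    using R by (auto simp: represents_def)
  have "sn_eq n ((u @ w) @ delta_pow n (k + p)) (u @ (w @ delta_pow n k) @ delta_pow n p)"
    by (simp add: delta_pow_add sn_eq.refl)
  also have "sn_eq n \<dots> (u @ (delta_pow n k @ w) @ delta_pow n p)"
    by (rule sn_eq_context[OF delta_pow_central[OF w]])
  also have "sn_eq n \<dots> (fword_word n g @ delta_pow n q)" using pq(1) by simp
  finally show ?thesis using pq(2) unfolding represents_def by (intro exI[of _ "k + p"] exI[of _ q]) auto
qed

lemma represents_weval:
  assumes n: "2 \<le> n" and w: "set w \<subseteq> {0..<n}"
  shows "represents n w (fst (weval (Gn n) (gen n) w)) (snd (weval (Gn n) (gen n) w))"
  using w
proof (induction w)
  case Nil then show ?case by (auto simp: represents_def neg_count_def intro!: exI[of _ 0] sn_eq.refl)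
next
  case (Cons j w)
  obtain g e where ge: "weval (Gn n) (gen n) w = (g, e)" by fastforce
  have "set g \<subseteq> letters n" using weval_gen_closed[of n w] ge by (auto simp: fwords_def)
  moreover have R: "represents n w g e" using Cons ge by simp
  moreover have j: "j < n" "set w \<subseteq> {0..<n}" using Cons.prems by auto
  ultimately consider "j < n - 1" | "j = n - 1" by linarith
  then show ?case
  proof cases
    case 1
    then show ?thesis
      using represents_gen_low[OF 1 R \<open>set g \<subseteq> letters n\<close>] ge by (simp add: gen_low)
  next
    case 2
    have "represents n (co_prefix n (n - 1) @ w) (fmult (finv (pos_prefix n)) g) (e + int (n - 1))"
      using represents_co_prefix[OF _ R \<open>set g \<subseteq> letters n\<close>, of "n - 1"] n by simp
    moreover have "co_prefix n (n - 1) = [n - 1] @ delta_pow n (n - 2) @ []"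
      using co_prefix_literal[of "n - 1" n] n upt_conv_Cons[of "n - 1" n] by (simp add: numeral_2_eq_2)
    moreover have "e + int (n - 1) = (e + 1) + int (n - 2)" using n by simp
    ultimately have "represents n ([n - 1] @ w) (fmult (finv (pos_prefix n)) g) (e + 1)"
      using represents_remove_delta_pow j(2) by (metis append.assoc append_Nil2)
    moreover have "gen n j = (finv (pos_prefix n), 1)" using 2 n by (simp add: gen_def)
    ultimately show ?thesis using ge 2 by (simp add: add.commute)
  qed
qed

lemma weval_gen_faithful:
  assumes n: "2 \<le> n" and u: "u \<in> sn_words n" and v: "v \<in> sn_words n"
  shows "weval (Gn n) (gen n) u = weval (Gn n) (gen n) v \<longleftrightarrow> sn_eq n u v"
proof
  assume e: "weval (Gn n) (gen n) u = weval (Gn n) (gen n) v"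
  obtain g a where ga: "weval (Gn n) (gen n) u = (g, a)" by fastforce
  obtain p q where pq: "sn_eq n (u @ delta_pow n p) (fword_word n g @ delta_pow n q)"
    "a + int p = int (neg_count g) + int q"
    using represents_weval[OF n, of u] u ga by (auto simp: represents_def sn_words_def)
  obtain p' q' where pq': "sn_eq n (v @ delta_pow n p') (fword_word n g @ delta_pow n q')"
    "a + int p' = int (neg_count g) + int q'"
    using represents_weval[OF n, of v] v ga e by (auto simp: represents_def sn_words_def)
  have "sn_eq n (u @ delta_pow n (p + q')) (fword_word n g @ delta_pow n (q + q'))"
    using sn_eq_append_right[OF pq(1), of "delta_pow n q'"] by (simp add: delta_pow_add)
  moreover have "sn_eq n (v @ delta_pow n (p' + q)) (fword_word n g @ delta_pow n (q + q'))"
    using sn_eq_append_right[OF pq'(1), of "delta_pow n q"] by (simp add: delta_pow_add add.commute)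
  moreover have "p' + q = p + q'" using pq(2) pq'(2) by linarith
  ultimately have "sn_eq n (u @ delta_pow n (p + q')) (v @ delta_pow n (p + q'))"
    by (metis sn_eq.sym sn_eq.trans)
  then show "sn_eq n u v" using sn_eq_cancel_delta_pow u v n by (simp add: sn_words_def)
next
  have "\<And>k. weval (Gn n) (gen n) (rotate k [0..<n]) = weval (Gn n) (gen n) [0..<n]"
    using weval_rotate_delta[OF n] weval_delta[OF n] by simp
  then show "sn_eq n u v \<Longrightarrow> weval (Gn n) (gen n) u = weval (Gn n) (gen n) v"
    by (rule weval_sn_eq[OF group.is_monoid[OF group_Gn] gen_closed])
qed

lemma weval_fword_word:
  assumes n: "2 \<le> n" and g: "g \<in> fwords (letters n)"
  shows "weval (Gn n) (gen n) (fword_word n g) = (g, int (neg_count g))"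
  using g
proof (induction g)
  case (Cons l g)
  have gw: "g \<in> fwords (letters n)" and rl: "reduced (l # g)" and l: "l \<in> letters n"
    using Cons.prems by (auto simp: fwords_def intro: reduced_tl)
  have "weval (Gn n) (gen n) (letter_word n l) = ([l], if l < 0 then 1 else 0)"
  proof (cases "0 < l")
    case True
    define j where "j = nat l - 1"
    have "l = int j + 1" "j < n - 1" "letter_word n l = [j]"
      using True l by (auto simp: j_def letters_def letter_word_def)
    then show ?thesis using True by (simp add: weval_gen_single gen_low del: weval_Cons)
  next
    case False
    define j where "j = nat (- l) - 1"
    have "l = - (int j + 1)" "j < n - 1" "letter_word n l = co_letter n j"
      using False l by (auto simp: j_def letters_def letter_word_def)
    then show ?thesis using False weval_co_letter[OF n] by simp
  qed
  then show ?case
    using Cons.IH[OF gw] cancel_letter_reduced_Cons[OF rl] by (simp add: weval_gen_append neg_count_def)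
qed (simp add: neg_count_def)

lemma weval_delta_pow: "2 \<le> n \<Longrightarrow> weval (Gn n) (gen n) (delta_pow n k) = ([], int k)"
  by (induction k) (simp_all add: weval_gen_append weval_delta)

lemma FZ_centre_pow: "([], 1) [^]\<^bsub>FZ L\<^esub> (k::nat) = ([], int k)"
  by (induction k) auto

lemma carrier_Gn_fractions:
  assumes n: "2 \<le> n"
  shows "carrier (Gn n) = {weval (Gn n) (gen n) w \<otimes>\<^bsub>Gn n\<^esub> inv\<^bsub>Gn n\<^esub> (weval (Gn n) (gen n) [0..<n] [^]\<^bsub>Gn n\<^esub> k) | w k.
                          w \<in> sn_words n \<and> (k :: nat) \<ge> 0}" (is "_ = ?fractions")
proof
  interpret group "Gn n" by (rule group_Gn)
  show "?fractions \<subseteq> carrier (Gn n)"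
  proof
    fix z assume "z \<in> ?fractions"
    then obtain w and k :: nat where "z = weval (Gn n) (gen n) w \<otimes>\<^bsub>Gn n\<^esub>
        inv\<^bsub>Gn n\<^esub> (weval (Gn n) (gen n) [0..<n] [^]\<^bsub>Gn n\<^esub> k)" by blast
    then show "z \<in> carrier (Gn n)" by (simp only: m_closed inv_closed nat_pow_closed weval_gen_closed)
  qed
  show "carrier (Gn n) \<subseteq> ?fractions"
  proof
    fix z assume "z \<in> carrier (Gn n)"
    then obtain g e where z: "z = (g, e)" "g \<in> fwords (letters n)" by auto
    define w where "w = fword_word n g @ delta_pow n (nat e)"
    define k where "k = neg_count g + nat (- e)"
    have w_word: "w \<in> sn_words n" using set_fword_word[of g n] set_delta_pow[of n "nat e"] z(2)
      by (auto simp: w_def sn_words_def fwords_def)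
    have "weval (Gn n) (gen n) w = (g, int (neg_count g) + int (nat e))"
      using z(2) weval_fword_word[OF n] weval_delta_pow[OF n]
      by (simp add: w_def weval_gen_append fmult_Nil fwords_reduced)
    moreover have "inv\<^bsub>Gn n\<^esub> (weval (Gn n) (gen n) [0..<n] [^]\<^bsub>Gn n\<^esub> k) = ([], - int k)"
      using inv_Gn[of "[]" n "int k"] by (simp add: weval_delta[OF n] FZ_centre_pow fwords_def finv_def)
    ultimately have "z = weval (Gn n) (gen n) w \<otimes>\<^bsub>Gn n\<^esub>
        inv\<^bsub>Gn n\<^esub> (weval (Gn n) (gen n) [0..<n] [^]\<^bsub>Gn n\<^esub> k)"
      using z by (simp add: fmult_Nil fwords_reduced k_def)
    then show "z \<in> ?fractions" using w_word by blast
  qed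
qed

definition free_part :: "int set \<Rightarrow> (int list \<times> int) set" where
  "free_part L = fwords L \<times> {0}"

definition centre_part :: "(int list \<times> int) set" where
  "centre_part = {[]} \<times> UNIV"

lemma inv_Gn_letter: "l \<in> letters n \<Longrightarrow> inv\<^bsub>Gn n\<^esub> ([l], 0) = ([- l], 0)"
  using inv_Gn[of "[l]" n 0] by (simp add: fwords_def finv_def)

lemma letter_in_generate:
  assumes l: "l \<in> letters n" shows "([l], 0) \<in> generate (Gn n) (gen n ` {0..<n - 1})"
proof -
  have "([\<bar>l\<bar>], 0) = gen n (nat \<bar>l\<bar> - 1)" "nat \<bar>l\<bar> - 1 \<in> {0..<n - 1}"
    using l by (auto simp: gen_low letters_def)
  then have abs_gen: "([\<bar>l\<bar>], 0) \<in> gen n ` {0..<n - 1}" by (metis image_eqI)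
  show ?thesis
  proof (cases "0 < l")
    case True then show ?thesis using generate.incl[OF abs_gen] by simp
  next
    case False
    have "\<bar>l\<bar> \<in> letters n" using l by (simp add: letters_def)
    then have inv_eq: "inv\<^bsub>Gn n\<^esub> ([\<bar>l\<bar>], 0) = ([l], 0)" using inv_Gn_letter False by simp
    show ?thesis using generate.inv[OF abs_gen, of "Gn n"] unfolding inv_eq .
  qed
qed

lemma generate_gen_low: "generate (Gn n) (gen n ` {0..<n - 1}) = free_part (letters n)"
proof
  show "generate (Gn n) (gen n ` {0..<n - 1}) \<subseteq> free_part (letters n)"
  proof
    fix z assume "z \<in> generate (Gn n) (gen n ` {0..<n - 1})"
    then show "z \<in> free_part (letters n)"
    proof (induction rule: generate.induct)
      case (inv h)
      then obtain i where "i < n - 1" "h = ([int i + 1], 0)" by (auto simp: gen_low)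
      then show ?case using inv_Gn_letter[of "int i + 1" n]
        by (auto simp: free_part_def fwords_def letters_def)
    next
      case (eng h1 h2) then show ?case by (auto simp: free_part_def intro: fwords_fmult)
    qed (auto simp: free_part_def fwords_def letters_def gen_low)
  qed
next
  have "(g, 0) \<in> generate (Gn n) (gen n ` {0..<n - 1})" if "g \<in> fwords (letters n)" for g
    using that
  proof (induction g)
    case Nil then show ?case using generate.one[of "Gn n"] by simp
  next
    case (Cons l g)
    have "g \<in> fwords (letters n)" and rl: "reduced (l # g)" and "l \<in> letters n"
      using Cons.prems by (auto simp: fwords_def intro: reduced_tl)
    from generate.eng[OF letter_in_generate[OF \<open>l \<in> letters n\<close>] Cons.IH[OF \<open>g \<in> fwords (letters n)\<close>]]
    show ?case by (simp add: cancel_letter_reduced_Cons[OF rl])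
  qed
  then show "free_part (letters n) \<subseteq> generate (Gn n) (gen n ` {0..<n - 1})"
    by (auto simp: free_part_def)
qed

lemma centre_int_pow: "([], 1) [^]\<^bsub>Gn n\<^esub> (k::int) = ([], k)"
  using inv_Gn[of "[]" n] by (simp add: int_pow_def2 FZ_centre_pow fwords_def finv_def)

lemma generate_centre: "generate (Gn n) {([], 1)} = centre_part"
  using group.generate_pow[OF group_Gn, of "([], 1)" n]
  by (auto simp: centre_int_pow centre_part_def fwords_def)

lemma infinite_centre_part: "infinite centre_part"
  unfolding centre_part_def by (simp add: finite_cartesian_product_iff)

lemma FZ_iso_DirProd: "FZ L \<cong> DirProd (FZ L\<lparr>carrier := free_part L\<rparr>) (FZ L\<lparr>carrier := centre_part\<rparr>)"
proof (rule is_isoI)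
  let ?h = "\<lambda>(g, e). ((g, 0::int), ([]::int list, e))"
  show "?h \<in> iso (FZ L) (DirProd (FZ L\<lparr>carrier := free_part L\<rparr>) (FZ L\<lparr>carrier := centre_part\<rparr>))"
    unfolding iso_def hom_def bij_betw_def
    by (auto simp: DirProd_def free_part_def centre_part_def image_iff intro!: inj_onI)
qed

definition signed_letter :: "(int list \<times> int) \<times> bool \<Rightarrow> int" where
  "signed_letter p = (if snd p then hd (fst (fst p)) else - hd (fst (fst p)))"

lemma signed_product_gen_low:
  assumes "fst ` set ws \<subseteq> gen n ` {0..<n - 1}"
  shows "foldr (\<lambda>(g, b) acc. (if b then g else inv\<^bsub>Gn n\<^esub> g) \<otimes>\<^bsub>Gn n\<^esub> acc) ws \<one>\<^bsub>Gn n\<^esub>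
         = (fmult (map signed_letter ws) [], 0)"
  using assms
proof (induction ws)
  case (Cons p ws)
  obtain h b where p: "p = (h, b)" by fastforce
  obtain i where i: "i < n - 1" "h = ([int i + 1], 0)" using Cons.prems p by (auto simp: gen_low)
  have "inv\<^bsub>Gn n\<^esub> h = ([- (int i + 1)], 0)" using i inv_Gn_letter[of "int i + 1" n] by (simp add: letters_def)
  then show ?case using Cons p i by (simp add: signed_letter_def)
qed simp

text \<open>The images of \<open>a\<^sub>1, \<dots>, a\<^sub>n\<^sub>-\<^sub>1\<close> form a free basis: a freely reduced word in them and their
  inverses evaluates to a nonempty reduced word.\<close>
lemma free_basis_gen_low: "free_basis (Gn n) (gen n ` {0..<n - 1})"
  unfolding free_basis_def
proof (intro conjI allI impI)
  show "gen n ` {0..<n - 1} \<subseteq> carrier (Gn n)" using gen_closed by blast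
  fix ws :: "((int list \<times> int) \<times> bool) list"
  assume ws: "ws \<noteq> [] \<and> fst ` set ws \<subseteq> gen n ` {0..<n - 1} \<and> free_reduced ws"
  have letter: "\<exists>i. fst (ws ! k) = ([int i + 1], 0)" if "k < length ws" for k
    using ws that nth_mem[OF that] by (force simp: gen_low)
  have "reduced (map signed_letter ws)" unfolding reduced_iff
  proof (intro allI impI notI)
    fix k assume k: "Suc k < length (map signed_letter ws)"
      and inverse: "map signed_letter ws ! Suc k = - (map signed_letter ws ! k)"
    obtain i1 i2 where "fst (ws ! k) = ([int i1 + 1], 0)" "fst (ws ! Suc k) = ([int i2 + 1], 0)"
      using letter[of k] letter[of "Suc k"] k by auto
    then have "fst (ws ! k) = fst (ws ! Suc k) \<and> snd (ws ! k) \<noteq> snd (ws ! Suc k)"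
      using inverse k by (auto simp: signed_letter_def split: if_splits)
    then show False using ws k unfolding free_reduced_def by auto
  qed
  then show "foldr (\<lambda>(g, b) acc. (if b then g else inv\<^bsub>Gn n\<^esub> g) \<otimes>\<^bsub>Gn n\<^esub> acc) ws \<one>\<^bsub>Gn n\<^esub> \<noteq> \<one>\<^bsub>Gn n\<^esub>"
    using signed_product_gen_low[of ws n] ws by (simp add: fmult_Nil)
qed

lemma card_gen_low: "card (gen n ` {0..<n - 1}) = n - 1"
  by (subst card_image) (auto intro!: inj_onI simp: gen_low)

lemma Gn_decomposition:
  assumes n: "2 \<le> n"
  shows "let F = generate (Gn n) (gen n ` {0..<n - 1});
             C = generate (Gn n) {weval (Gn n) (gen n) [0..<n]}
         in (\<exists>B. B \<subseteq> F \<and> card B = n - 1 \<and> generate (Gn n) B = F \<and> free_basis (Gn n) B)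
          \<and> infinite C
          \<and> Gn n \<cong> DirProd ((Gn n)\<lparr>carrier := F\<rparr>) ((Gn n)\<lparr>carrier := C\<rparr>)"
proof -
  have "gen n ` {0..<n - 1} \<subseteq> generate (Gn n) (gen n ` {0..<n - 1})"
    by (auto intro: generate.incl)
  then show ?thesis
    unfolding Let_def weval_delta[OF n] generate_centre generate_gen_low[symmetric]
    using card_gen_low free_basis_gen_low infinite_centre_part FZ_iso_DirProd[of "letters n"]
    by (auto simp only: generate_gen_low)
qed

theorem theorem2p2:
  fixes n :: nat
  assumes "n \<ge> 3"
  shows "(\<forall>u\<in>sn_words n. \<forall>v\<in>sn_words n. \<forall>w\<in>sn_words n.
            (sn_eq n (u @ w) (v @ w) \<longrightarrow> sn_eq n u v) \<and>
            (sn_eq n (w @ u) (w @ v) \<longrightarrow> sn_eq n u v))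
       \<and> (\<forall>w\<in>sn_words n. sn_eq n (w @ [0..<n]) ([0..<n] @ w))
       \<and> (\<exists>(G :: (int list \<times> int) monoid) (x :: nat \<Rightarrow> int list \<times> int).
            group G \<and> x ` {0..<n} \<subseteq> carrier G
          \<and> (\<forall>u\<in>sn_words n. \<forall>v\<in>sn_words n. weval G x u = weval G x v \<longleftrightarrow> sn_eq n u v)
          \<and> carrier G = {weval G x w \<otimes>\<^bsub>G\<^esub> inv\<^bsub>G\<^esub> (weval G x [0..<n] [^]\<^bsub>G\<^esub> k) | w k.
                          w \<in> sn_words n \<and> (k :: nat) \<ge> 0}
          \<and> (let F = generate G (x ` {0..<n - 1});
                 C = generate G {weval G x [0..<n]}
             in (\<exists>B. B \<subseteq> F \<and> card B = n - 1 \<and> generate G B = F \<and> free_basis G B)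
              \<and> infinite C
              \<and> G \<cong> DirProd (G\<lparr>carrier := F\<rparr>) (G\<lparr>carrier := C\<rparr>)))"
proof -
  have n: "2 \<le> n" using assms by simp
  show ?thesis
  proof (intro conjI exI[of _ "Gn n"] exI[of _ "gen n"] ballI)
    show "gen n ` {0..<n} \<subseteq> carrier (Gn n)" using gen_closed by blast
    show "sn_eq n (w @ [0..<n]) ([0..<n] @ w)" if "w \<in> sn_words n" for w
      using delta_central that by (simp add: sn_words_def)
  qed ((use sn_cancellative_if_faithful[OF group_Gn gen_closed weval_gen_faithful[OF n]]
          weval_gen_faithful[OF n] in blast)
      | fact group_Gn carrier_Gn_fractions[OF n] Gn_decomposition[OF n])+
qed

end
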